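(* Let $n\ge4$ be a power of $2$. Then $\mathcal{B}^{(n)}\subseteq\mathcal{M}^{(b,n)}$ for every integer $b\in(1,n)$ dividing $n$. When $n\ge512$ the inclusion is strict.
   Context: Matrices over $\mathbb{F}\in\{\mathbb{R},\mathbb{C}\}$. For $d$ dividing $n$: $\mathcal{B}\mathcal{D}^{(d,n)}$ is the class of $n\times n$ block-diagonal matrices with $n/d$ arbitrary diagonal blocks of size $d\times d$; $\mathcal{D}\mathcal{B}^{(d,n)}$ is the class of $n\times n$ matrices which, partitioned into an $(n/d)\times(n/d)$ grid of $d\times d$ blocks, have every block diagonal. The Monarch class $\mathcal{M}^{(b,n)}$ is the set of products $\mathbf{L}\mathbf{R}$ with $\mathbf{L}\in\mathcal{D}\mathcal{B}^{(b,n)}$ and $\mathbf{R}\in\mathcal{B}\mathcal{D}^{(b,n)}$. For $k\in\{2,4,\dots,n\}$ a power of 2, a butterfly factor matrix in $\mathcal{B}\mathcal{F}^{(n,k)}$ is an $n\times n$ block-diagonal matrix with $n/k$ diagonal blocks, each a $k\times k$ butterfly factor $\begin{bmatrix}\mathbf{D}_1&\mathbf{D}_2\\\mathbf{D}_3&\mathbf{D}_4\end{bmatrix}$ with $\mathbf{D}_1,\dots,\mathbf{D}_4$ arbitrary $(k/2)\times(k/2)$ diagonal matrices. The butterfly class $\mathcal{B}^{(n)}$ consists of all products $\mathbf{B}_n\mathbf{B}_{n/2}\cdots\mathbf{B}_2$ with $\mathbf{B}_k\in\mathcal{B}\mathcal{F}^{(n,k)}$. *)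

theory Defs
  imports "Jordan_Normal_Form.Matrix"
begin

definition BD :: "nat \<Rightarrow> nat \<Rightarrow> 'a::field mat set" where
  "BD d n = {A \<in> carrier_mat n n. \<forall>i<n. \<forall>j<n. i div d \<noteq> j div d \<longrightarrow> A $$ (i, j) = 0}"

text \<open>(n/d) x (n/d) grid of d x d blocks, every block diagonal.\<close>
definition DB :: "nat \<Rightarrow> nat \<Rightarrow> 'a::field mat set" where
  "DB d n = {A \<in> carrier_mat n n. \<forall>i<n. \<forall>j<n. i mod d \<noteq> j mod d \<longrightarrow> A $$ (i, j) = 0}"

definition Monarch :: "nat \<Rightarrow> nat \<Rightarrow> 'a::field mat set" where
  "Monarch b n = {L * R | L R. L \<in> DB b n \<and> R \<in> BD b n}"

text \<open>Butterfly factor matrices: block diagonal with n/k blocks of size k x k, each block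
  of the form [D1 D2; D3 D4] with (k/2) x (k/2) diagonal D_i, i.e. inside a block the
  entry (r,s) may be nonzero only if r = s mod k/2.\<close>
definition BF :: "nat \<Rightarrow> nat \<Rightarrow> 'a::field mat set" where
  "BF n k = {A \<in> carrier_mat n n. \<forall>i<n. \<forall>j<n.
      (i div k \<noteq> j div k \<or> (i mod k) mod (k div 2) \<noteq> (j mod k) mod (k div 2)) \<longrightarrow> A $$ (i, j) = 0}"

text \<open>Butterfly class: products B_n B_{n/2} ... B_2, B_k in BF n k. The list Bs is
  [B_n, B_{n/2}, ..., B_2] (entry t has k = n / 2^t), and 2^(length Bs) = n.\<close>
definition Butterfly :: "nat \<Rightarrow> 'a::field mat set" where
  "Butterfly n = {foldr (*) Bs (1\<^sub>m n) | Bs. 2 ^ length Bs = n \<and>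
      (\<forall>t<length Bs. Bs ! t \<in> BF n (n div 2 ^ t))}"

end

theory Submission
  imports Defs "HOL-Computational_Algebra.Primes"
begin

text \<open>A butterfly factor in \<open>BF n k\<close> only couples indices in the same \<open>k\<close>-block that agree
  modulo \<open>k/2\<close>. For a power of two \<open>b\<close>, the factors with \<open>k > b\<close> therefore only couple indices
  congruent modulo \<open>b\<close> (they lie in \<open>DB b n\<close>), and those with \<open>k \<le> b\<close> only couple indices
  in the same \<open>b\<close>-block (they lie in \<open>BD b n\<close>). The product runs through decreasing \<open>k\<close>, so
  the first factors multiply to \<open>L\<close> and the remaining ones to \<open>R\<close>, both classes being closed
  under products.

  For strictness: if \<open>b | i\<close> and \<open>j < b\<close>, the only nonzero term of \<open>(L R)(i,j)\<close> is
  \<open>L(i,0) R(0,j)\<close>, so every Monarch matrix has a vanishing \<open>2\<times>2\<close> minor on rows \<open>0, b\<close> and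
  columns \<open>0, j\<close>. A 0-1 matrix with two ones violates this for \<open>b = 2\<close> (resp. \<open>b = 4\<close>) while
  lying in every \<open>Monarch b n\<close> with \<open>b > 2\<close> (resp. in \<open>Monarch 2 n\<close>), whereas butterflies
  lie in both \<open>Monarch 2 n\<close> and \<open>Monarch 4 n\<close>.\<close>

definition fibre_block_mat :: "nat \<Rightarrow> (nat \<Rightarrow> 'b) \<Rightarrow> 'a::zero mat set" where
  "fibre_block_mat n f = {A \<in> carrier_mat n n. \<forall>i<n. \<forall>j<n. f i \<noteq> f j \<longrightarrow> A $$ (i, j) = 0}"

lemma DB_eq_fibre_block_mat: "DB d n = fibre_block_mat n (\<lambda>i. i mod d)"
  by (simp add: DB_def fibre_block_mat_def)

lemma BD_eq_fibre_block_mat: "BD d n = fibre_block_mat n (\<lambda>i. i div d)"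
  by (simp add: BD_def fibre_block_mat_def)

lemma BF_eq_fibre_block_mat: "BF n k = fibre_block_mat n (\<lambda>i. (i div k, i mod k mod (k div 2)))"
  by (auto simp: BF_def fibre_block_mat_def)

lemma fibre_block_mat_carrier: "A \<in> fibre_block_mat n f \<Longrightarrow> A \<in> carrier_mat n n"
  by (simp add: fibre_block_mat_def)

lemma one_mat_in_fibre_block_mat: "(1\<^sub>m n :: 'a::semiring_1 mat) \<in> fibre_block_mat n f"
  by (auto simp: fibre_block_mat_def)

lemma mult_in_fibre_block_mat:
  fixes A B :: "'a::semiring_0 mat"
  assumes A: "A \<in> fibre_block_mat n f" and B: "B \<in> fibre_block_mat n f"
  shows "A * B \<in> fibre_block_mat n f"
proof -
  have carrier: "A \<in> carrier_mat n n" "B \<in> carrier_mat n n"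
    using A B by (simp_all add: fibre_block_mat_carrier)
  have "(A * B) $$ (i, j) = 0" if ij: "i < n" "j < n" "f i \<noteq> f j" for i j
  proof -
    have terms: "A $$ (i, k) * B $$ (k, j) = 0" if "k < n" for k
      using A B ij that by (cases "f i = f k") (simp_all add: fibre_block_mat_def)
    have "(A * B) $$ (i, j) = (\<Sum>k = 0..<n. A $$ (i, k) * B $$ (k, j))"
      using carrier ij by (simp add: scalar_prod_def)
    also have "\<dots> = 0"
      using terms by (intro sum.neutral) simp
    finally show ?thesis .
  qed
  then show ?thesis
    using carrier by (simp add: fibre_block_mat_def)
qed

lemma foldr_mult_in_fibre_block_mat:
  fixes As :: "'a::semiring_1 mat list"
  shows "set As \<subseteq> fibre_block_mat n f \<Longrightarrow> foldr (*) As (1\<^sub>m n) \<in> fibre_block_mat n f"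
proof (induction As)
  case Nil
  show ?case
    by (simp add: one_mat_in_fibre_block_mat)
next
  case (Cons A As)
  then have "A \<in> fibre_block_mat n f" "foldr (*) As (1\<^sub>m n) \<in> fibre_block_mat n f"
    by simp_all
  then show ?case
    using mult_in_fibre_block_mat by simp
qed

lemma fibre_block_mat_mono:
  assumes "\<And>i j. i < n \<Longrightarrow> j < n \<Longrightarrow> f i = f j \<Longrightarrow> g i = g j"
  shows "fibre_block_mat n f \<subseteq> fibre_block_mat n g"
  unfolding fibre_block_mat_def using assms by blast

lemma foldr_mult_carrier_mat:
  fixes As :: "'a::semiring_1 mat list"
  shows "set As \<subseteq> carrier_mat n n \<Longrightarrow> foldr (*) As (1\<^sub>m n) \<in> carrier_mat n n"
  by (induction As) auto

lemma foldr_mult_append: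
  fixes As Bs :: "'a::semiring_1 mat list"
  assumes "set As \<subseteq> carrier_mat n n" and "set Bs \<subseteq> carrier_mat n n"
  shows "foldr (*) (As @ Bs) (1\<^sub>m n) = foldr (*) As (1\<^sub>m n) * foldr (*) Bs (1\<^sub>m n)"
  using assms(1)
proof (induction As)
  case Nil
  show ?case
    by (simp add: left_mult_one_mat[OF foldr_mult_carrier_mat[OF assms(2)]])
next
  case (Cons A As)
  then show ?case
    using foldr_mult_carrier_mat[OF assms(2)] foldr_mult_carrier_mat[of As n]
    by (simp add: assoc_mult_mat[of A n n _ n _ n])
qed

lemma BF_subset_DB:
  assumes "c < e"
  shows "BF n (2 ^ e) \<subseteq> (DB (2 ^ c) n :: 'a::field mat set)"
  unfolding BF_eq_fibre_block_mat DB_eq_fibre_block_mat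
proof (rule fibre_block_mat_mono)
  have "(2::nat) ^ e div 2 = 2 ^ (e - 1)"
    using assms by (cases e) auto
  then have "x mod 2 ^ e mod (2 ^ e div 2) mod 2 ^ c = x mod 2 ^ c" for x :: nat
    using assms by (simp add: mod_exp_eq)
  then show "i mod 2 ^ c = j mod 2 ^ c"
    if "(i div 2 ^ e, i mod 2 ^ e mod (2 ^ e div 2)) = (j div 2 ^ e, j mod 2 ^ e mod (2 ^ e div 2))"
    for i j :: nat
    using that by (metis prod.inject)
qed

lemma BF_subset_BD:
  assumes "e \<le> c"
  shows "BF n (2 ^ e) \<subseteq> (BD (2 ^ c) n :: 'a::field mat set)"
  unfolding BF_eq_fibre_block_mat BD_eq_fibre_block_mat
proof (rule fibre_block_mat_mono)
  have "x div 2 ^ c = x div 2 ^ e div 2 ^ (c - e)" for x :: nat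
    using assms by (simp add: div_exp_eq)
  then show "i div 2 ^ c = j div 2 ^ c"
    if "(i div 2 ^ e, i mod 2 ^ e mod (2 ^ e div 2)) = (j div 2 ^ e, j mod 2 ^ e mod (2 ^ e div 2))"
    for i j :: nat
    using that by (metis prod.inject)
qed

lemma Butterfly_subset_Monarch_pow2:
  assumes n: "n = 2 ^ m" and "c \<le> m"
  shows "(Butterfly n :: 'a::field mat set) \<subseteq> Monarch (2 ^ c) n"
proof
  fix B :: "'a mat"
  assume "B \<in> Butterfly n"
  then obtain Bs where B: "B = foldr (*) Bs (1\<^sub>m n)" and "2 ^ length Bs = n"
    and factors: "\<forall>t<length Bs. Bs ! t \<in> BF n (n div 2 ^ t)"
    by (auto simp: Butterfly_def)
  then have len: "length Bs = m"
    using n by simp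
  have factor_BF: "Bs ! t \<in> BF n (2 ^ (m - t))" if "t < m" for t
    using factors that len n by (simp add: power_diff)
  define p where "p = m - c"
  have left: "set (take p Bs) \<subseteq> DB (2 ^ c) n"
  proof
    fix A assume "A \<in> set (take p Bs)"
    then obtain t where t: "t < p" "t < m" "A = Bs ! t"
      using len by (auto simp: in_set_conv_nth)
    then have "c < m - t"
      using p_def by simp
    then show "A \<in> DB (2 ^ c) n"
      using subsetD[OF BF_subset_DB factor_BF[OF \<open>t < m\<close>]] t(3) by simp
  qed
  then have L: "foldr (*) (take p Bs) (1\<^sub>m n) \<in> DB (2 ^ c) n"
    by (simp add: DB_eq_fibre_block_mat foldr_mult_in_fibre_block_mat)
  have right: "set (drop p Bs) \<subseteq> BD (2 ^ c) n"
  proof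
    fix A assume "A \<in> set (drop p Bs)"
    then obtain t where "t < length Bs - p" "A = Bs ! (p + t)"
      by (auto simp: in_set_conv_nth)
    then have "p + t < m" "A = Bs ! (p + t)"
      using len by auto
    moreover have "m - (p + t) \<le> c"
      using p_def by simp
    ultimately show "A \<in> BD (2 ^ c) n"
      using subsetD[OF BF_subset_BD factor_BF] by simp
  qed
  then have R: "foldr (*) (drop p Bs) (1\<^sub>m n) \<in> BD (2 ^ c) n"
    by (simp add: BD_eq_fibre_block_mat foldr_mult_in_fibre_block_mat)
  have "set (take p Bs) \<subseteq> carrier_mat n n" "set (drop p Bs) \<subseteq> carrier_mat n n"
    using left right by (auto simp: DB_def BD_def)
  then have "B = foldr (*) (take p Bs) (1\<^sub>m n) * foldr (*) (drop p Bs) (1\<^sub>m n)"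
    unfolding B by (simp flip: foldr_mult_append)
  then show "B \<in> Monarch (2 ^ c) n"
    using L R by (auto simp: Monarch_def)
qed

lemma Butterfly_subset_Monarch:
  assumes "n = 2 ^ m" and "b dvd n"
  shows "(Butterfly n :: 'a::field mat set) \<subseteq> Monarch b n"
proof -
  obtain c where "c \<le> m" "b = 2 ^ c"
    using assms divides_primepow_nat[OF two_is_prime_nat] by blast
  then show ?thesis
    using Butterfly_subset_Monarch_pow2[OF assms(1)] by simp
qed

lemma Monarch_entry:
  assumes L: "L \<in> DB b n" and R: "R \<in> BD b n"
    and "i < n" "j < n" "i mod b = 0" "j < b"
  shows "(L * R) $$ (i, j) = L $$ (i, 0) * R $$ (0, j)"
proof -
  have carrier: "L \<in> carrier_mat n n" "R \<in> carrier_mat n n"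
    using L R by (simp_all add: DB_def BD_def)
  have "L $$ (i, k) * R $$ (k, j) = 0" if "k \<in> {0..<n} - {0}" for k
  proof (cases "k mod b = 0")
    case True
    then have "k div b \<noteq> j div b"
      using that \<open>j < b\<close> by auto
    then show ?thesis
      using R that \<open>j < n\<close> by (simp add: BD_def)
  next
    case False
    then show ?thesis
      using L that assms(3,5) by (simp add: DB_def)
  qed
  then have "(\<Sum>k \<in> {0..<n} - {0}. L $$ (i, k) * R $$ (k, j)) = 0"
    by (rule sum.neutral[rule_format])
  moreover have "(L * R) $$ (i, j) = (\<Sum>k = 0..<n. L $$ (i, k) * R $$ (k, j))"
    using carrier assms(3,4) by (simp add: scalar_prod_def)
  ultimately show ?thesis
    using assms(3) by (simp add: sum.remove[of "{0..<n}" 0])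
qed

lemma Monarch_minor:
  assumes "M \<in> Monarch b n" and "b < n" and "j < b"
  shows "M $$ (0, 0) * M $$ (b, j) = M $$ (0, j) * M $$ (b, 0)"
proof -
  obtain L R where M: "M = L * R" and "L \<in> DB b n" "R \<in> BD b n"
    using assms(1) by (auto simp: Monarch_def)
  then show ?thesis
    using assms(2,3) Monarch_entry[of L b n R] by simp
qed

lemma Monarch_not_subset_Monarch_2:
  assumes "2 < b" and "b \<le> n"
  shows "\<not> (Monarch b n :: 'a::field mat set) \<subseteq> Monarch 2 n"
proof
  define W :: "'a mat" where
    "W = mat n n (\<lambda>(i, j). if (i, j) = (0, 0) \<or> (i, j) = (2, 1) then 1 else 0)"
  have "W \<in> BD b n"
    using assms by (auto simp: W_def BD_def)
  moreover have "W = 1\<^sub>m n * W"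
    by (simp add: W_def)
  ultimately have "W \<in> Monarch b n"
    using one_mat_in_fibre_block_mat unfolding Monarch_def DB_eq_fibre_block_mat by blast
  moreover assume "Monarch b n \<subseteq> (Monarch 2 n :: 'a mat set)"
  ultimately have "W \<in> Monarch 2 n"
    by blast
  from Monarch_minor[OF this, of 1] show False
    using assms by (simp add: W_def)
qed

lemma Monarch_2_not_subset_Monarch_4:
  assumes "4 < n"
  shows "\<not> (Monarch 2 n :: 'a::field mat set) \<subseteq> Monarch 4 n"
proof
  define W :: "'a mat" where
    "W = mat n n (\<lambda>(i, j). if (i, j) = (0, 0) \<or> (i, j) = (4, 2) then 1 else 0)"
  have "W \<in> DB 2 n"
    by (auto simp: W_def DB_def)
  moreover have "W = W * 1\<^sub>m n"
    by (simp add: W_def)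
  ultimately have "W \<in> Monarch 2 n"
    using one_mat_in_fibre_block_mat unfolding Monarch_def BD_eq_fibre_block_mat by blast
  moreover assume "Monarch 2 n \<subseteq> (Monarch 4 n :: 'a mat set)"
  ultimately have "W \<in> Monarch 4 n"
    by blast
  from Monarch_minor[OF this, of 2] show False
    using assms by (simp add: W_def)
qed

lemma Butterfly_psubset_Monarch:
  assumes n: "n = 2 ^ m" and "8 \<le> n" and "1 < b" and "b dvd n"
  shows "(Butterfly n :: 'a::field mat set) \<subset> Monarch b n"
proof -
  have "(2::nat) ^ 3 \<le> 2 ^ m"
    using \<open>8 \<le> n\<close> n by simp
  then have "3 \<le> m"
    by (simp only: power_increasing_iff)
  then have "4 dvd n" "2 dvd n"
    using le_imp_power_dvd[of 2 m "2::nat"] le_imp_power_dvd[of 1 m "2::nat"] n by simp_all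
  have subset: "(Butterfly n :: 'a mat set) \<subseteq> Monarch b n"
    using Butterfly_subset_Monarch[OF n \<open>b dvd n\<close>] .
  show ?thesis
  proof (cases "b = 2")
    case True
    have "(Butterfly n :: 'a mat set) \<subseteq> Monarch 4 n"
      using Butterfly_subset_Monarch[OF n \<open>4 dvd n\<close>] .
    moreover have "\<not> (Monarch 2 n :: 'a mat set) \<subseteq> Monarch 4 n"
      by (rule Monarch_2_not_subset_Monarch_4) (use \<open>8 \<le> n\<close> in simp)
    ultimately show ?thesis
      using subset True by auto
  next
    case False
    have "(Butterfly n :: 'a mat set) \<subseteq> Monarch 2 n"
      using Butterfly_subset_Monarch[OF n \<open>2 dvd n\<close>] .
    moreover have "\<not> (Monarch b n :: 'a mat set) \<subseteq> Monarch 2 n"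
      by (rule Monarch_not_subset_Monarch_2)
        (use False \<open>1 < b\<close> dvd_imp_le[OF \<open>b dvd n\<close>] \<open>8 \<le> n\<close> in simp_all)
    ultimately show ?thesis
      using subset by auto
  qed
qed

theorem theoremC15:
  fixes n b :: nat
  assumes "\<exists>m. n = 2 ^ m" and "n \<ge> 4"
    and "1 < b" and "b < n" and "b dvd n"
  shows "(Butterfly n :: real mat set) \<subseteq> Monarch b n
       \<and> (n \<ge> 512 \<longrightarrow> (Butterfly n :: real mat set) \<subset> Monarch b n)
       \<and> (Butterfly n :: complex mat set) \<subseteq> Monarch b n
       \<and> (n \<ge> 512 \<longrightarrow> (Butterfly n :: complex mat set) \<subset> Monarch b n)"
proof -
  obtain m where n: "n = 2 ^ m"
    using assms(1) by blast
  note subset = Butterfly_subset_Monarch[OF n \<open>b dvd n\<close>]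
  note psubset = Butterfly_psubset_Monarch[OF n _ \<open>1 < b\<close> \<open>b dvd n\<close>]
  show ?thesis
    using subset[where 'a = real] subset[where 'a = complex]
      psubset[where 'a = real] psubset[where 'a = complex]
    by simp
qed

end
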